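(* Under Assumptions 1 and 2, the dual variables generated by the accurate-gradient algorithm satisfy $\|y_i(t)\|\le\sqrt n\,\kappa_2$ for all $i\in\mathcal V$ and all $t\in\{1,\dots,T\}$.
   Context: Network: Let $n\ge2$, $\mathcal V=\{1,\dots,n\}$. For $t=0,1,2,\dots$, $\mathcal G(t)=(\mathcal V,\mathcal E(t),A(t))$ is a digraph with weight matrix $A(t)=(a_{ij}(t))_{n\times n}$, where for some $\gamma>0$, $\gamma\le a_{ij}(t)\le1$ if $(j,i)\in\mathcal E(t)$ and $a_{ij}(t)=0$ otherwise; $\mathcal N_i(t)=\{j:(j,i)\in\mathcal E(t)\}$ and $i\in\mathcal N_i(t)$. Assumption 1: there is an integer $U>0$ such that for every $t\ge0$ the digraph $(\mathcal V,\bigcup_{k=tU}^{(t+1)U-1}\mathcal E(k))$ is strongly connected, and $A(t)1_n=A(t)^T1_n=1_n$ for all $t$. Problem: $\Omega\subset\mathbb R^m$ is convex; for each $i\in\mathcal V$ and $t\ge0$, $f_i^t:\Omega\times\Omega\to\mathbb R$ and $g_i^t=(g_{i1}^t,\dots,g_{ih}^t)^T:\Omega\to\mathbb R^h$; $\mathcal X^t=\{x\in\Omega:\sum_ig_i^t(x)\le0\}$; $\nabla_2$ is the gradient in the second argument; $\nabla g_i^t(x)=[\nabla g_{i1}^t(x),\dots,\nabla g_{ih}^t(x)]\in\mathbb R^{m\times h}$. Assumption 2: (i) $f_i^t(x,\cdot)$ convex, each $g_{ik}^t$ convex (differentiable); (ii) $\mathcal X^t\neq\emptyset$, $\Omega$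 compact with $\|x\|\le\kappa$ on $\Omega$; (iii) $\|\nabla_2f_i^t(x,y)\|\le\kappa_1$, $\|g_i^t(x)\|\le\kappa_2$, $\|\nabla g_{ik}^t(x)\|\le\kappa_3$ on $\Omega$. Algorithm: $\phi:\mathbb R^m\to\mathbb R$ differentiable and $\mu$-strongly convex, $\mathcal D_\phi(x,y)=\phi(x)-\phi(y)-\langle\nabla\phi(y),x-y\rangle$. Non-increasing step sizes $\zeta_t,\eta_t\in(0,1]$ with $\zeta_t\le\eta_t$; $x_i(0)\in\Omega$, $y_i(0)=0\in\mathbb R^h$; for $t\ge0$: $z_i(t)=\sum_{j\in\mathcal N_i(t)}a_{ij}(t)x_j(t)$; $x_i(t+1)=\arg\min_{x\in\Omega}\{\mathcal D_\phi(x,z_i(t))+\langle\zeta_t\nabla_2f_i^t(x_i(t),x_i(t))+\eta_t\nabla g_i^t(x_i(t))y_i(t),x\rangle\}$; $y_i(t+1)=[(1-\eta_t)\sum_{j\in\mathcal N_i(t)}a_{ij}(t)y_j(t)+\eta_tg_i^t(x_i(t))]_+$ (componentwise positive part). $T$ is the (finite) time horizon. *)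

theory Defs
  imports "HOL-Analysis.Analysis"
begin

definition strongly_connected_on :: "nat set \<Rightarrow> (nat \<times> nat) set \<Rightarrow> bool" where
  "strongly_connected_on V E \<longleftrightarrow> (\<forall>i\<in>V. \<forall>j\<in>V. (i, j) \<in> (E \<inter> (V \<times> V))\<^sup>*)"

definition strongly_convex_grad ::
  "real \<Rightarrow> (real^'m \<Rightarrow> real) \<Rightarrow> (real^'m \<Rightarrow> real^'m) \<Rightarrow> bool" where
  "strongly_convex_grad \<mu> phi dphi \<longleftrightarrow>
     (\<forall>x y. phi y \<ge> phi x + dphi x \<bullet> (y - x) + \<mu> / 2 * (norm (y - x))\<^sup>2)"

definition bregman :: "(real^'m \<Rightarrow> real) \<Rightarrow> (real^'m \<Rightarrow> real^'m) \<Rightarrow> real^'m \<Rightarrow> real^'m \<Rightarrow> real" where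
  "bregman phi dphi x y = phi x - phi y - dphi y \<bullet> (x - y)"

end

theory Submission
  imports Defs
begin

text \<open>The ball of radius \<open>\<kappa>\<^sub>2\<close> is convex
  and the positive part does not increase the norm, so by induction every dual iterate stays
  in that ball; the factor \<open>sqrt n \<ge> 1\<close> is then only slack.\<close>

lemma norm_pos_part_cart_le: "norm (\<chi> k. max 0 (v $ k)) \<le> norm (v :: real^'n)"
  by (rule norm_le_componentwise_cart) simp

lemma norm_convex_combination_le:
  fixes v :: "'a \<Rightarrow> 'b::real_normed_vector"
  assumes "finite S" "\<And>j. j \<in> S \<Longrightarrow> 0 \<le> w j" "sum w S = 1"
    and "\<And>j. j \<in> S \<Longrightarrow> norm (v j) \<le> c"
  shows "norm (\<Sum>j\<in>S. w j *\<^sub>R v j) \<le> c"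
  using convex_sum[OF assms(1) convex_cball[of 0 c], where a = w and y = v] assms by simp

lemma norm_mix_le:
  fixes a b :: "'a::real_normed_vector"
  assumes "0 \<le> \<eta>" "\<eta> \<le> 1" "norm a \<le> c" "norm b \<le> c"
  shows "norm ((1 - \<eta>) *\<^sub>R a + \<eta> *\<^sub>R b) \<le> c"
  using convexD[OF convex_cball[of 0 c], of a b "1 - \<eta>" \<eta>] assms by simp

lemma projected_averaging_bounded:
  fixes y :: "nat \<Rightarrow> nat \<Rightarrow> real^'h" and b :: "nat \<Rightarrow> nat \<Rightarrow> real^'h"
    and w :: "nat \<Rightarrow> nat \<Rightarrow> nat \<Rightarrow> real" and N :: "nat \<Rightarrow> nat \<Rightarrow> nat set"
  assumes init: "\<And>i. i \<in> V \<Longrightarrow> norm (y i 0) \<le> c"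
    and nbrs: "\<And>t i. i \<in> V \<Longrightarrow> N t i \<subseteq> V" and fin: "finite V"
    and w_nonneg: "\<And>t i j. i \<in> V \<Longrightarrow> j \<in> N t i \<Longrightarrow> 0 \<le> w t i j"
    and w_sum: "\<And>t i. i \<in> V \<Longrightarrow> sum (w t i) (N t i) = 1"
    and \<eta>: "\<And>t. 0 \<le> \<eta> t \<and> \<eta> t \<le> 1"
    and b_bound: "\<And>t i. i \<in> V \<Longrightarrow> norm (b t i) \<le> c"
    and step: "\<And>t i. i \<in> V \<Longrightarrow> y i (Suc t) =
       (\<chi> k. max 0 ((1 - \<eta> t) * (\<Sum>j\<in>N t i. w t i j * (y j t $ k)) + \<eta> t * (b t i $ k)))"
  shows "i \<in> V \<Longrightarrow> norm (y i t) \<le> c"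
proof (induction t arbitrary: i)
  case 0
  then show ?case by (rule init)
next
  case (Suc t)
  let ?avg = "\<Sum>j\<in>N t i. w t i j *\<^sub>R y j t"
  have "y i (Suc t) = (\<chi> k. max 0 (((1 - \<eta> t) *\<^sub>R ?avg + \<eta> t *\<^sub>R b t i) $ k))"
    using step[OF Suc.prems] by (simp add: sum_component)
  also have "norm \<dots> \<le> norm ((1 - \<eta> t) *\<^sub>R ?avg + \<eta> t *\<^sub>R b t i)"
    by (rule norm_pos_part_cart_le)
  also have "\<dots> \<le> c"
  proof (rule norm_mix_le)
    show "norm ?avg \<le> c"
      using nbrs[OF Suc.prems] fin
      by (intro norm_convex_combination_le w_nonneg w_sum Suc.prems Suc.IH)
         (auto intro: finite_subset)
  qed (use \<eta> b_bound Suc.prems in auto)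
  finally show ?case .
qed

theorem lemma3:
  fixes n :: nat and U :: nat and \<gamma> :: real
    and E :: "nat \<Rightarrow> (nat \<times> nat) set"
    and A :: "nat \<Rightarrow> nat \<Rightarrow> nat \<Rightarrow> real"
    and \<Omega> :: "(real^'m) set"
    and f :: "nat \<Rightarrow> nat \<Rightarrow> real^'m \<Rightarrow> real^'m \<Rightarrow> real"
    and df :: "nat \<Rightarrow> nat \<Rightarrow> real^'m \<Rightarrow> real^'m \<Rightarrow> real^'m"
    and g :: "nat \<Rightarrow> nat \<Rightarrow> real^'m \<Rightarrow> real^'h"
    and dg :: "nat \<Rightarrow> nat \<Rightarrow> 'h \<Rightarrow> real^'m \<Rightarrow> real^'m"
    and \<kappa> \<kappa>1 \<kappa>2 \<kappa>3 :: real
    and phi :: "real^'m \<Rightarrow> real" and dphi :: "real^'m \<Rightarrow> real^'m" and \<mu> :: real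
    and \<zeta> \<eta> :: "nat \<Rightarrow> real"
    and x :: "nat \<Rightarrow> nat \<Rightarrow> real^'m" and y :: "nat \<Rightarrow> nat \<Rightarrow> real^'h"
    and T :: nat
  assumes n2: "n \<ge> 2"
    \<comment> \<open>network: (j,i) \<in> E t means j is an in-neighbour of i; nodes are {1..n}\<close>
    and gamma_pos: "\<gamma> > 0"
    and E_sub: "\<And>t. E t \<subseteq> {1..n} \<times> {1..n}"
    and self_loop: "\<And>t i. i \<in> {1..n} \<Longrightarrow> (i, i) \<in> E t"
    and A_edge: "\<And>t i j. i \<in> {1..n} \<Longrightarrow> j \<in> {1..n} \<Longrightarrow> (j, i) \<in> E t \<Longrightarrow>
                   \<gamma> \<le> A t i j \<and> A t i j \<le> 1"
    and A_nonedge: "\<And>t i j. (j, i) \<notin> E t \<Longrightarrow> A t i j = 0"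
    \<comment> \<open>Assumption 1\<close>
    and U_pos: "U > 0"
    and conn: "\<And>t. strongly_connected_on {1..n} (\<Union>k\<in>{t*U..<(t+1)*U}. E k)"
    and row_stoch: "\<And>t i. i \<in> {1..n} \<Longrightarrow> (\<Sum>j=1..n. A t i j) = 1"
    and col_stoch: "\<And>t j. j \<in> {1..n} \<Longrightarrow> (\<Sum>i=1..n. A t i j) = 1"
    \<comment> \<open>Assumption 2\<close>
    and Omega_convex: "convex \<Omega>"
    and Omega_compact: "compact \<Omega>"
    and Omega_bound: "\<And>z. z \<in> \<Omega> \<Longrightarrow> norm z \<le> \<kappa>"
    and f_convex: "\<And>t i u. i \<in> {1..n} \<Longrightarrow> u \<in> \<Omega> \<Longrightarrow> convex_on \<Omega> (f t i u)"
    and f_grad: "\<And>t i u v. i \<in> {1..n} \<Longrightarrow> u \<in> \<Omega> \<Longrightarrow> v \<in> \<Omega> \<Longrightarrow>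
                   (f t i u has_derivative (\<lambda>d. df t i u v \<bullet> d)) (at v within \<Omega>)"
    and g_convex: "\<And>t i k. i \<in> {1..n} \<Longrightarrow> convex_on \<Omega> (\<lambda>z. g t i z $ k)"
    and g_grad: "\<And>t i k u. i \<in> {1..n} \<Longrightarrow> u \<in> \<Omega> \<Longrightarrow>
                   ((\<lambda>z. g t i z $ k) has_derivative (\<lambda>d. dg t i k u \<bullet> d)) (at u within \<Omega>)"
    and X_nonempty: "\<And>t. \<exists>z\<in>\<Omega>. \<forall>k. (\<Sum>i=1..n. g t i z $ k) \<le> 0"
    and df_bound: "\<And>t i u v. i \<in> {1..n} \<Longrightarrow> u \<in> \<Omega> \<Longrightarrow> v \<in> \<Omega> \<Longrightarrow> norm (df t i u v) \<le> \<kappa>1"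
    and g_bound: "\<And>t i u. i \<in> {1..n} \<Longrightarrow> u \<in> \<Omega> \<Longrightarrow> norm (g t i u) \<le> \<kappa>2"
    and dg_bound: "\<And>t i k u. i \<in> {1..n} \<Longrightarrow> u \<in> \<Omega> \<Longrightarrow> norm (dg t i k u) \<le> \<kappa>3"
    \<comment> \<open>mirror map\<close>
    and mu_pos: "\<mu> > 0"
    and phi_grad: "\<And>z. (phi has_derivative (\<lambda>d. dphi z \<bullet> d)) (at z)"
    and phi_sc: "strongly_convex_grad \<mu> phi dphi"
    \<comment> \<open>step sizes\<close>
    and zeta_range: "\<And>t. 0 < \<zeta> t \<and> \<zeta> t \<le> 1"
    and eta_range: "\<And>t. 0 < \<eta> t \<and> \<eta> t \<le> 1"
    and zeta_le_eta: "\<And>t. \<zeta> t \<le> \<eta> t"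
    and zeta_mono: "\<And>s t. s \<le> t \<Longrightarrow> \<zeta> t \<le> \<zeta> s"
    and eta_mono: "\<And>s t. s \<le> t \<Longrightarrow> \<eta> t \<le> \<eta> s"
    \<comment> \<open>algorithm\<close>
    and x_init: "\<And>i. i \<in> {1..n} \<Longrightarrow> x i 0 \<in> \<Omega>"
    and y_init: "\<And>i. i \<in> {1..n} \<Longrightarrow> y i 0 = 0"
    and x_step: "\<And>i t. i \<in> {1..n} \<Longrightarrow>
       x i (Suc t) \<in> \<Omega> \<and>
       (\<forall>w\<in>\<Omega>.
          bregman phi dphi (x i (Suc t)) (\<Sum>j\<in>{j\<in>{1..n}. (j, i) \<in> E t}. A t i j *\<^sub>R x j t)
          + (\<zeta> t *\<^sub>R df t i (x i t) (x i t)
             + \<eta> t *\<^sub>R (\<Sum>k\<in>UNIV. (y i t $ k) *\<^sub>R dg t i k (x i t))) \<bullet> x i (Suc t)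
        \<le> bregman phi dphi w (\<Sum>j\<in>{j\<in>{1..n}. (j, i) \<in> E t}. A t i j *\<^sub>R x j t)
          + (\<zeta> t *\<^sub>R df t i (x i t) (x i t)
             + \<eta> t *\<^sub>R (\<Sum>k\<in>UNIV. (y i t $ k) *\<^sub>R dg t i k (x i t))) \<bullet> w)"
    and y_step: "\<And>i t. i \<in> {1..n} \<Longrightarrow>
       y i (Suc t) = (\<chi> k. max 0 ((1 - \<eta> t) * (\<Sum>j\<in>{j\<in>{1..n}. (j, i) \<in> E t}. A t i j * (y j t $ k))
                                    + \<eta> t * (g t i (x i t) $ k)))"
  shows "\<forall>i\<in>{1..n}. \<forall>t\<in>{1..T}. norm (y i t) \<le> sqrt (real n) * \<kappa>2"
proof -
  let ?N = "\<lambda>t i. {j\<in>{1..n}. (j, i) \<in> E t}"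
  have x_in: "x i t \<in> \<Omega>" if "i \<in> {1..n}" for i t
    using x_init[OF that] x_step[OF that] by (cases t) auto
  have weights_sum: "sum (A t i) (?N t i) = 1" if "i \<in> {1..n}" for t i
  proof -
    have "sum (A t i) (?N t i) = (\<Sum>j=1..n. A t i j)"
      by (rule sum.mono_neutral_left) (auto simp: A_nonedge)
    then show ?thesis using row_stoch[OF that] by simp
  qed
  have \<kappa>2_nonneg: "0 \<le> \<kappa>2"
    using g_bound[where t = 0 and i = 1 and u = "x 1 0"] x_in[of 1 0] n2
    by (auto intro: order_trans[OF norm_ge_zero])
  have "norm (y i t) \<le> \<kappa>2" if "i \<in> {1..n}" for i t
  proof (rule projected_averaging_bounded[where w = A and N = ?N and \<eta> = \<eta>
      and b = "\<lambda>t i. g t i (x i t)"])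
    show "\<And>t i j. i \<in> {1..n} \<Longrightarrow> j \<in> ?N t i \<Longrightarrow> 0 \<le> A t i j"
      using A_edge gamma_pos by fastforce
  qed (use that y_init \<kappa>2_nonneg weights_sum eta_range g_bound x_in y_step
       in \<open>auto simp: less_imp_le\<close>)
  moreover have "\<kappa>2 \<le> sqrt (real n) * \<kappa>2"
    using \<kappa>2_nonneg n2 by (simp add: mult_le_cancel_right1)
  ultimately show ?thesis by (meson order_trans)
qed

end
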